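(* Let $N,T,U$ be integers with $0\le T<U\le N$, let $\mathbb{F}_q$ be a finite field, let $d$ be divisible by $U-T$, and let $W\in\mathbb{F}_q^{U\times N}$ be a $T$-private MDS matrix with columns $W_1,\dots,W_N$. For each $i\in[N]$, let $\mathbf{z}_i$ be uniformly random in $\mathbb{F}_q^d$, partitioned into $[\mathbf{z}_i]_1,\dots,[\mathbf{z}_i]_{U-T}\in\mathbb{F}_q^{d/(U-T)}$, let $[\mathbf{n}_i]_{U-T+1},\dots,[\mathbf{n}_i]_U\in\mathbb{F}_q^{d/(U-T)}$ be random, and set $[\tilde{\mathbf{z}}_i]_j=([\mathbf{z}_i]_1,\dots,[\mathbf{z}_i]_{U-T},[\mathbf{n}_i]_{U-T+1},\dots,[\mathbf{n}_i]_U)\cdot W_j$ for $j\in[N]$, where all $\mathbf{z}_i$'s and $[\mathbf{n}_i]_k$'s are mutually independent across users. Then for any $\mathcal{T}\subseteq[N]$ of size $T$ and any $\mathcal{U}_1\subseteq[N]$ with $|\mathcal{U}_1|\ge U$, if the random masks $[\mathbf{n}_i]_k$'s are jointly uniformly random, we have $$I\big(\{\mathbf{z}_i\}_{i\in[N]\setminus\mathcal{T}};\ \{\mathbf{z}_i\}_{i\in\mathcal{T}},\{[\tilde{\mathbf{z}}_j]_i\}_{j\in[N],\,i\in\mathcal{T}}\big)=0.$$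
   Context: A matrix $W\in\mathbb{F}_q^{U\times N}$ is MDS if every $U\times U$ submatrix of $W$ is invertible; it is $T$-private MDS if, in addition, the $T\times N$ submatrix formed by its rows $U-T+1,\dots,U$ is MDS (every $T\times T$ submatrix of it is invertible). The product of the row of vectors with the column $W_j$ means the linear combination $\sum_{k=1}^U W_{k,j}\,v_k$ of the $U$ vectors $v_k\in\mathbb{F}_q^{d/(U-T)}$. $I(\cdot;\cdot)$ denotes mutual information. *)

theory Defs
  imports "HOL-Probability.Probability" "Jordan_Normal_Form.DL_Submatrix"
begin

definition MDS :: "'a::field mat \<Rightarrow> bool" where
  "MDS W \<longleftrightarrow> (\<forall>S. S \<subseteq> {0..<dim_col W} \<longrightarrow> card S = dim_row W \<longrightarrow>
      invertible_mat (submatrix W UNIV S))"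

(* T-private MDS: W is MDS and the submatrix of its last T rows is MDS.
   Rows are 0-indexed, so rows U-T+1..U (1-indexed) are {U-T..<U}. *)
definition private_MDS :: "nat \<Rightarrow> 'a::field mat \<Rightarrow> bool" where
  "private_MDS T W \<longleftrightarrow> MDS W \<and>
     MDS (submatrix W {dim_row W - T..<dim_row W} UNIV)"

(* Sample space: z i c  (user i < N, coordinate c < d) and
   n i k c  (user i < N, mask block k in {U-T..<U}, coordinate c < d div (U-T)). *)
definition sample_space ::
  "nat \<Rightarrow> nat \<Rightarrow> nat \<Rightarrow> nat \<Rightarrow>
   ((nat \<Rightarrow> nat \<Rightarrow> 'a) \<times> (nat \<Rightarrow> nat \<Rightarrow> nat \<Rightarrow> 'a)) set" where
  "sample_space N T U d =
     {(z, n). z \<in> {0..<N} \<rightarrow>\<^sub>E ({0..<d} \<rightarrow>\<^sub>E UNIV) \<and>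
              n \<in> {0..<N} \<rightarrow>\<^sub>E ({U-T..<U} \<rightarrow>\<^sub>E ({0..<d div (U-T)} \<rightarrow>\<^sub>E UNIV))}"

(* block k (0-indexed, k < U) of the vector ([z_i]_1,...,[z_i]_{U-T},[n_i]_{U-T+1},...,[n_i]_U) *)
definition block ::
  "nat \<Rightarrow> nat \<Rightarrow> nat \<Rightarrow> (nat \<Rightarrow> nat \<Rightarrow> 'a) \<Rightarrow> (nat \<Rightarrow> nat \<Rightarrow> nat \<Rightarrow> 'a) \<Rightarrow>
   nat \<Rightarrow> nat \<Rightarrow> nat \<Rightarrow> 'a" where
  "block T U d z n i k c =
     (if k < U - T then z i (k * (d div (U-T)) + c) else n i k c)"

definition enc ::
  "nat \<Rightarrow> nat \<Rightarrow> nat \<Rightarrow> 'a::field mat \<Rightarrow> (nat \<Rightarrow> nat \<Rightarrow> 'a) \<Rightarrow>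
   (nat \<Rightarrow> nat \<Rightarrow> nat \<Rightarrow> 'a) \<Rightarrow> nat \<Rightarrow> nat \<Rightarrow> nat \<Rightarrow> 'a" where
  "enc T U d W z n i j =
     restrict (\<lambda>c. \<Sum>k<U. W $$ (k, j) * block T U d z n i k c) {0..<d div (U-T)}"

end

(* The argument is a one-time pad on the uniform sample space. Given two values of the secrets
   outside Tset, translate those secrets by their difference. This changes the encoded masks at
   the colluders' columns Tset by a linear function of the difference, and that change can be
   cancelled by also translating the random masks, because the last T rows of W restricted to the
   columns Tset form an invertible T x T matrix. The combined translation is a bijection of the
   sample space that maps one fibre of the outside secrets onto the other and fixes the colluders'
   view. So every fibre carries the same distribution of the view, the two are independent, and
   their mutual information vanishes. *)

theory Submission
  imports Defs
begin

lemma (in prob_space) mutual_information_eq_0_if_prob_product: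
  assumes rvs: "random_variable S X" "random_variable T Y"
    and prod: "\<And>A B. A \<in> sets S \<Longrightarrow> B \<in> sets T \<Longrightarrow>
      prob (X -` A \<inter> Y -` B \<inter> space M) = prob (X -` A \<inter> space M) * prob (Y -` B \<inter> space M)"
  shows "mutual_information b S T X Y = 0"
proof -
  let ?S = "distr M S X" and ?T = "distr M T Y" and ?J = "distr M (S \<Otimes>\<^sub>M T) (\<lambda>x. (X x, Y x))"
  have XY: "random_variable (S \<Otimes>\<^sub>M T) (\<lambda>x. (X x, Y x))"
    using rvs by (rule measurable_Pair)
  interpret X: prob_space ?S by (rule prob_space_distr) (fact rvs)
  interpret Y: prob_space ?T by (rule prob_space_distr) (fact rvs)
  interpret XY: prob_space ?J by (rule prob_space_distr) (fact XY)
  have "?S \<Otimes>\<^sub>M ?T = ?J"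
  proof (rule pair_measure_eqI)
    show "sigma_finite_measure ?S" "sigma_finite_measure ?T" ..
    fix A B assume A: "A \<in> sets ?S" and B: "B \<in> sets ?T"
    have "(\<lambda>x. (X x, Y x)) -` (A \<times> B) = X -` A \<inter> Y -` B" by auto
    then have "emeasure ?J (A \<times> B) = emeasure M (X -` A \<inter> Y -` B \<inter> space M)"
      using A B by (subst emeasure_distr[OF XY]) auto
    also have "\<dots> = emeasure M (X -` A \<inter> space M) * emeasure M (Y -` B \<inter> space M)"
      using prod[of A B] A B by (simp add: emeasure_eq_measure measure_nonneg ennreal_mult)
    also have "\<dots> = emeasure ?S A * emeasure ?T B"
      using rvs A B by (simp add: emeasure_distr)
    finally show "emeasure ?S A * emeasure ?T B = emeasure ?J (A \<times> B)" by simp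
  qed simp
  then show ?thesis
    unfolding mutual_information_def by (simp add: XY.KL_same_eq_0)
qed

lemma card_product_if_fibres_equinumerous:
  assumes fin: "finite \<Omega>"
    and equi: "\<And>x x' B. x \<in> X ` \<Omega> \<Longrightarrow> x' \<in> X ` \<Omega> \<Longrightarrow>
      card {w\<in>\<Omega>. X w = x \<and> Y w \<in> B} = card {w\<in>\<Omega>. X w = x' \<and> Y w \<in> B}"
  shows "card {w\<in>\<Omega>. X w \<in> A \<and> Y w \<in> B} * card \<Omega> = card {w\<in>\<Omega>. X w \<in> A} * card {w\<in>\<Omega>. Y w \<in> B}"
proof (cases "\<Omega> = {}")
  case False
  then obtain x0 where x0: "x0 \<in> X ` \<Omega>" by blast
  define g where "g B = card {w\<in>\<Omega>. X w = x0 \<and> Y w \<in> B}" for B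
  have joint: "card {w\<in>\<Omega>. X w \<in> A \<and> Y w \<in> B} = card (A \<inter> X ` \<Omega>) * g B" for A B
  proof -
    have "{w\<in>\<Omega>. X w \<in> A \<and> Y w \<in> B} = (\<Union>x\<in>A \<inter> X ` \<Omega>. {w\<in>\<Omega>. X w = x \<and> Y w \<in> B})" by auto
    then have "card {w\<in>\<Omega>. X w \<in> A \<and> Y w \<in> B} = (\<Sum>x\<in>A \<inter> X ` \<Omega>. card {w\<in>\<Omega>. X w = x \<and> Y w \<in> B})"
      by (simp, intro card_UN_disjoint) (auto simp: fin)
    also have "\<dots> = (\<Sum>x\<in>A \<inter> X ` \<Omega>. g B)"
      unfolding g_def by (rule sum.cong[OF refl], rule equi[OF _ x0]) blast
    finally show ?thesis by simp
  qed
  show ?thesis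
    using joint[of A B] joint[of A UNIV] joint[of UNIV B] joint[of UNIV UNIV] by simp
qed simp

lemma mutual_information_pmf_of_set_eq_0_if_fibres_movable:
  assumes fin: "finite \<Omega>" and ne: "\<Omega> \<noteq> {}"
    and move: "\<And>w0 w1. w0 \<in> \<Omega> \<Longrightarrow> w1 \<in> \<Omega> \<Longrightarrow> \<exists>f. inj_on f \<Omega> \<and> f ` \<Omega> \<subseteq> \<Omega> \<and>
      (\<forall>w\<in>\<Omega>. X w = X w0 \<longrightarrow> X (f w) = X w1) \<and> (\<forall>w\<in>\<Omega>. Y (f w) = Y w)"
  shows "prob_space.mutual_information (measure_pmf (pmf_of_set \<Omega>)) b
    (count_space UNIV) (count_space UNIV) X Y = 0"
proof (rule measure_pmf.mutual_information_eq_0_if_prob_product)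
  have le: "card {w\<in>\<Omega>. X w = X w0 \<and> Y w \<in> B} \<le> card {w\<in>\<Omega>. X w = X w1 \<and> Y w \<in> B}"
    if w01: "w0 \<in> \<Omega>" "w1 \<in> \<Omega>" for w0 w1 B
  proof -
    obtain f where "inj_on f \<Omega>" "f ` \<Omega> \<subseteq> \<Omega>"
      "\<forall>w\<in>\<Omega>. X w = X w0 \<longrightarrow> X (f w) = X w1" "\<forall>w\<in>\<Omega>. Y (f w) = Y w"
      using move[OF w01] by blast
    then show ?thesis
      by (intro card_inj_on_le[of f]) (auto simp: fin elim: inj_on_subset)
  qed
  fix A B
  have "card {w\<in>\<Omega>. X w \<in> A \<and> Y w \<in> B} * card \<Omega> = card {w\<in>\<Omega>. X w \<in> A} * card {w\<in>\<Omega>. Y w \<in> B}"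
    by (rule card_product_if_fibres_equinumerous[OF fin]) (auto intro: antisym le)
  then have "real (card {w\<in>\<Omega>. X w \<in> A \<and> Y w \<in> B}) / card \<Omega> =
      real (card {w\<in>\<Omega>. X w \<in> A}) / card \<Omega> * (real (card {w\<in>\<Omega>. Y w \<in> B}) / card \<Omega>)"
    using fin ne by (simp add: field_simps flip: of_nat_mult)
  then show "measure_pmf.prob (pmf_of_set \<Omega>) (X -` A \<inter> Y -` B \<inter> space (measure_pmf (pmf_of_set \<Omega>))) =
      measure_pmf.prob (pmf_of_set \<Omega>) (X -` A \<inter> space (measure_pmf (pmf_of_set \<Omega>))) *
      measure_pmf.prob (pmf_of_set \<Omega>) (Y -` B \<inter> space (measure_pmf (pmf_of_set \<Omega>)))"
    using fin ne by (simp add: measure_pmf_of_set Int_def conj_commute)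
qed auto

lemma bij_betw_pick:
  assumes "finite S"
  shows "bij_betw (pick S) {..<card S} S"
proof (rule bij_betw_byWitness[where f' = "\<lambda>i. card {a\<in>S. a < i}"])
  show "(\<lambda>i. card {a\<in>S. a < i}) ` S \<subseteq> {..<card S}"
    using assms by (auto intro!: psubset_card_mono)
qed (auto simp: pick_card_in_set card_pick_le pick_in_set_le)

lemma submatrix_rows_cols: "submatrix (submatrix A I UNIV) UNIV J = submatrix A I J"
proof (rule eq_matI)
  fix i j assume "i < dim_row (submatrix A I J)" "j < dim_col (submatrix A I J)"
  then have i: "i < card {i. i < dim_row A \<and> i \<in> I}" and j: "j < card {j. j < dim_col A \<and> j \<in> J}"
    by (simp_all add: dim_submatrix)
  have "pick J j < dim_col A" using pick_le[OF j] .
  then show "submatrix (submatrix A I UNIV) UNIV J $$ (i, j) = submatrix A I J $$ (i, j)"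
    using i j by (simp add: submatrix_index dim_submatrix pick_UNIV)
qed (simp_all add: dim_submatrix)

lemma invertible_submatrix_imp_solvable:
  fixes A :: "'a::field mat"
  assumes inv: "invertible_mat (submatrix A I J)"
    and I: "I \<subseteq> {..<dim_row A}" and J: "J \<subseteq> {..<dim_col A}"
  shows "\<exists>v. \<forall>j\<in>J. (\<Sum>i\<in>I. A $$ (i, j) * v i) = t j"
proof -
  define M where "M = submatrix A I J"
  define n where "n = card I"
  have fin: "finite I" "finite J" using I J finite_subset by auto
  have rows: "{i. i < dim_row A \<and> i \<in> I} = I" and cols: "{j. j < dim_col A \<and> j \<in> J} = J"
    using I J by auto
  then have dimM: "dim_row M = n" "dim_col M = card J"
    unfolding M_def n_def by (simp_all add: dim_submatrix)
  obtain B where MB: "M * B = 1\<^sub>m n" and BM: "B * M = 1\<^sub>m (dim_row B)" and sq: "card J = n"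
    using inv dimM unfolding invertible_mat_def inverts_mat_def M_def[symmetric] by auto
  have M: "M \<in> carrier_mat n n" and B: "B \<in> carrier_mat n n"
    using dimM sq arg_cong[OF MB, of dim_col] arg_cong[OF BM, of dim_col] by auto
  define t' where "t' = vec n (\<lambda>b. t (pick J b))"
  define v' where "v' = transpose_mat B *\<^sub>v t'"
  have "transpose_mat M *\<^sub>v v' = transpose_mat (B * M) *\<^sub>v t'"
    unfolding v'_def using M B by (simp add: assoc_mult_mat_vec transpose_mult t'_def)
  also have "\<dots> = t'" using BM B by (simp add: t'_def)
  finally have sol: "transpose_mat M *\<^sub>v v' = t'" .
  have dim_v': "dim_vec v' = n" unfolding v'_def using B by simp
  show ?thesis
  proof (intro exI ballI)
    fix j assume "j \<in> J"
    define b where "b = card {a\<in>J. a < j}"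
    have b: "b < n" "pick J b = j"
      unfolding b_def using \<open>j \<in> J\<close> fin sq by (auto intro!: psubset_card_mono pick_card_in_set)
    have "(\<Sum>i\<in>I. A $$ (i, j) * vec_index v' (card {a\<in>I. a < i}))
        = (\<Sum>a<n. A $$ (pick I a, j) * vec_index v' (card {x\<in>I. x < pick I a}))"
      unfolding n_def by (rule sum.reindex_bij_betw[OF bij_betw_pick[OF fin(1)], symmetric])
    also have "\<dots> = (\<Sum>a<n. M $$ (a, b) * vec_index v' a)"
      unfolding M_def using b sq rows cols
      by (intro sum.cong refl) (simp add: submatrix_index card_pick_le n_def)
    also have "\<dots> = vec_index (transpose_mat M *\<^sub>v v') b"
      using b dimM sq dim_v' by (simp add: scalar_prod_def lessThan_atLeast0)
    also have "\<dots> = t j" using sol b by (simp add: t'_def)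
    finally show "(\<Sum>i\<in>I. A $$ (i, j) * vec_index v' (card {a\<in>I. a < i})) = t j" .
  qed
qed

lemma private_MDS_imp_solvable:
  fixes W :: "'a::field mat"
  assumes MDS: "private_MDS T W" and U: "dim_row W = U" "T \<le> U"
    and Tset: "Tset \<subseteq> {..<dim_col W}" "card Tset = T"
  shows "\<exists>v. \<forall>i\<in>Tset. (\<Sum>k\<in>{U-T..<U}. W $$ (k, i) * v k) = t i"
proof (rule invertible_submatrix_imp_solvable)
  define L where "L = submatrix W {U-T..<U} UNIV"
  have "{k. k < U \<and> k \<in> {U-T..<U}} = {U-T..<U}" by auto
  then have dimL: "dim_row L = T" "dim_col L = dim_col W"
    unfolding L_def using U by (simp_all add: dim_submatrix)
  have "MDS L" using MDS U unfolding private_MDS_def L_def by simp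
  then have "invertible_mat (submatrix L UNIV Tset)"
    unfolding MDS_def dimL using Tset by (simp add: lessThan_atLeast0)
  then show "invertible_mat (submatrix W {U-T..<U} Tset)"
    unfolding L_def submatrix_rows_cols .
qed (use U Tset in auto)

definition translate ::
  "nat \<Rightarrow> nat \<Rightarrow> nat \<Rightarrow> nat \<Rightarrow> (nat \<Rightarrow> nat \<Rightarrow> 'a::plus) \<Rightarrow> (nat \<Rightarrow> nat \<Rightarrow> nat \<Rightarrow> 'a) \<Rightarrow>
   (nat \<Rightarrow> nat \<Rightarrow> 'a) \<times> (nat \<Rightarrow> nat \<Rightarrow> nat \<Rightarrow> 'a) \<Rightarrow> (nat \<Rightarrow> nat \<Rightarrow> 'a) \<times> (nat \<Rightarrow> nat \<Rightarrow> nat \<Rightarrow> 'a)"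
  where
  "translate N T U d a b = (\<lambda>(z, n).
     ((\<lambda>i\<in>{0..<N}. \<lambda>c\<in>{0..<d}. z i c + a i c),
      (\<lambda>i\<in>{0..<N}. \<lambda>k\<in>{U-T..<U}. \<lambda>c\<in>{0..<d div (U-T)}. n i k c + b i k c)))"

definition secrets_outside :: "nat \<Rightarrow> nat set \<Rightarrow> (nat \<Rightarrow> nat \<Rightarrow> 'a) \<times> 'n \<Rightarrow> nat \<Rightarrow> nat \<Rightarrow> 'a" where
  "secrets_outside N Tset = (\<lambda>(z, n). restrict z ({0..<N} - Tset))"

definition colluders_view ::
  "nat \<Rightarrow> nat \<Rightarrow> nat \<Rightarrow> nat \<Rightarrow> 'a::field mat \<Rightarrow> nat set \<Rightarrow>
   (nat \<Rightarrow> nat \<Rightarrow> 'a) \<times> (nat \<Rightarrow> nat \<Rightarrow> nat \<Rightarrow> 'a) \<Rightarrow> (nat \<Rightarrow> nat \<Rightarrow> 'a) \<times> (nat \<times> nat \<Rightarrow> nat \<Rightarrow> 'a)"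
  where
  "colluders_view N T U d W Tset =
     (\<lambda>(z, n). (restrict z Tset, restrict (\<lambda>(j, i). enc T U d W z n j i) ({0..<N} \<times> Tset)))"

lemma sample_space_eq_Times:
  "sample_space N T U d =
     ({0..<N} \<rightarrow>\<^sub>E ({0..<d} \<rightarrow>\<^sub>E UNIV)) \<times> ({0..<N} \<rightarrow>\<^sub>E ({U-T..<U} \<rightarrow>\<^sub>E ({0..<d div (U-T)} \<rightarrow>\<^sub>E UNIV)))"
  unfolding sample_space_def by auto

lemma finite_sample_space: "finite (sample_space N T U d :: ((nat \<Rightarrow> nat \<Rightarrow> 'a::finite) \<times> _) set)"
  unfolding sample_space_eq_Times by (intro finite_cartesian_product finite_PiE) auto

lemma sample_space_not_empty: "sample_space N T U d \<noteq> {}"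
  unfolding sample_space_eq_Times by (simp add: PiE_eq_empty_iff)

lemma translate_in_sample_space: "translate N T U d a b w \<in> sample_space N T U d"
  by (auto simp: translate_def sample_space_def split: prod.splits)

lemma translate_uminus_translate:
  fixes a :: "nat \<Rightarrow> nat \<Rightarrow> 'a::ab_group_add"
  assumes "w \<in> sample_space N T U d"
  shows "translate N T U d (\<lambda>i c. - a i c) (\<lambda>i k c. - b i k c) (translate N T U d a b w) = w"
  using assms by (fastforce simp: translate_def sample_space_def PiE_iff extensional_def fun_eq_iff)

lemma inj_on_translate:
  fixes a :: "nat \<Rightarrow> nat \<Rightarrow> 'a::ab_group_add"
  shows "inj_on (translate N T U d a b) (sample_space N T U d)"
  by (rule inj_on_inverseI[where g = "translate N T U d (\<lambda>i c. - a i c) (\<lambda>i k c. - b i k c)"])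
    (rule translate_uminus_translate)

lemma block_translate:
  assumes "translate N T U d a b (z, n) = (z', n')" and "(U-T) dvd d"
    and "j < N" "k < U" "c < d div (U-T)"
  shows "block T U d z' n' j k c = block T U d z n j k c + block T U d a b j k c"
proof (cases "k < U-T")
  case True
  define D where "D = d div (U-T)"
  have "k * D + c < Suc k * D" using assms(5) by (simp add: D_def)
  also have "\<dots> \<le> (U-T) * D" using True by (intro mult_le_mono1) simp
  also have "\<dots> = d" using assms(2) by (simp add: D_def)
  finally show ?thesis using True assms(1,3) by (auto simp: block_def translate_def D_def)
qed (use assms in \<open>auto simp: block_def translate_def\<close>)

lemma enc_translate:
  assumes "translate N T U d a b (z, n) = (z', n')" and "(U-T) dvd d" and "j < N"
  shows "enc T U d W z' n' j i =
    (\<lambda>c\<in>{0..<d div (U-T)}. enc T U d W z n j i c + (\<Sum>k<U. W $$ (k, i) * block T U d a b j k c))"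
  unfolding enc_def using block_translate[OF assms]
  by (intro restrict_ext) (simp add: distrib_left sum.distrib)

lemma exists_compensating_masks:
  fixes W :: "'a::field mat" and a :: "nat \<Rightarrow> nat \<Rightarrow> 'a"
  assumes "private_MDS T W" "dim_row W = U" "T \<le> U" "Tset \<subseteq> {..<dim_col W}" "card Tset = T"
  shows "\<exists>b. \<forall>j i c. i \<in> Tset \<longrightarrow> (\<Sum>k<U. W $$ (k, i) * block T U d a b j k c) = 0"
proof -
  obtain sol where sol: "\<And>t i. i \<in> Tset \<Longrightarrow> (\<Sum>k\<in>{U-T..<U}. W $$ (k, i) * sol t k) = t i"
    using private_MDS_imp_solvable[OF assms] by metis
  define b where
    "b j k c = sol (\<lambda>i. - (\<Sum>k'<U-T. W $$ (k', i) * a j (k' * (d div (U-T)) + c))) k" for j k c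
  have "(\<Sum>k<U. W $$ (k, i) * block T U d a b j k c) = 0" if "i \<in> Tset" for j i c
  proof -
    have "{..<U} = {0..<U-T} \<union> {U-T..<U}" by auto
    then have "(\<Sum>k<U. W $$ (k, i) * block T U d a b j k c)
        = (\<Sum>k<U-T. W $$ (k, i) * a j (k * (d div (U-T)) + c)) + (\<Sum>k\<in>{U-T..<U}. W $$ (k, i) * b j k c)"
      by (simp add: sum.union_disjoint block_def lessThan_atLeast0)
    also have "\<dots> = 0" using sol[OF that] by (simp add: b_def)
    finally show ?thesis .
  qed
  then show ?thesis by blast
qed

lemma secrets_outside_translate:
  fixes w :: "(nat \<Rightarrow> nat \<Rightarrow> 'a::ab_group_add) \<times> (nat \<Rightarrow> nat \<Rightarrow> nat \<Rightarrow> 'a)"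
  assumes "w \<in> sample_space N T U d" and "w1 \<in> sample_space N T U d"
    and "secrets_outside N Tset w = secrets_outside N Tset w0"
  shows "secrets_outside N Tset
      (translate N T U d (\<lambda>i c. if i \<in> Tset then 0 else fst w1 i c - fst w0 i c) b w) =
    secrets_outside N Tset w1"
proof -
  obtain z n z0 n0 z1 n1 where w: "w = (z, n)" "w0 = (z0, n0)" "w1 = (z1, n1)"
    by (metis surj_pair)
  have z1: "z1 \<in> {0..<N} \<rightarrow>\<^sub>E ({0..<d} \<rightarrow>\<^sub>E UNIV)"
    using assms(2) unfolding w sample_space_def by simp
  have "(\<lambda>c\<in>{0..<d}. z i c + (z1 i c - z0 i c)) = z1 i" if i: "i \<in> {0..<N} - Tset" for i
  proof -
    have "z i = z0 i" using fun_cong[OF assms(3), of i] i unfolding secrets_outside_def w by simp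
    then have "(\<lambda>c\<in>{0..<d}. z i c + (z1 i c - z0 i c)) = restrict (z1 i) {0..<d}" by simp
    also have "\<dots> = z1 i" using PiE_restrict[OF PiE_mem[OF z1, of i]] i by simp
    finally show ?thesis .
  qed
  then show ?thesis
    unfolding secrets_outside_def translate_def w by (auto intro!: restrict_ext)
qed

lemma colluders_view_translate:
  assumes "w \<in> sample_space N T U d" and "(U-T) dvd d" and "Tset \<subseteq> {0..<N}"
    and "\<And>i c. i \<in> Tset \<Longrightarrow> a i c = 0"
    and "\<And>j i c. i \<in> Tset \<Longrightarrow> (\<Sum>k<U. W $$ (k, i) * block T U d a b j k c) = 0"
  shows "colluders_view N T U d W Tset (translate N T U d a b w) = colluders_view N T U d W Tset w"
proof -
  obtain z n z' n' where w: "w = (z, n)" and w': "translate N T U d a b (z, n) = (z', n')"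
    by (metis surj_pair)
  have z: "z \<in> {0..<N} \<rightarrow>\<^sub>E ({0..<d} \<rightarrow>\<^sub>E UNIV)"
    using assms(1) unfolding w sample_space_def by simp
  have "restrict z' Tset = restrict z Tset"
  proof (rule restrict_ext)
    fix i assume "i \<in> Tset"
    then have "i \<in> {0..<N}" using assms(3) by blast
    then have "z' i = restrict (z i) {0..<d}"
      using w' assms(4)[OF \<open>i \<in> Tset\<close>] by (auto simp: translate_def)
    then show "z' i = z i" using PiE_restrict[OF PiE_mem[OF z \<open>i \<in> {0..<N}\<close>]] by simp
  qed
  moreover have "enc T U d W z' n' j i = enc T U d W z n j i" if "j < N" "i \<in> Tset" for j i
    unfolding enc_translate[OF w' assms(2) \<open>j < N\<close>] assms(5)[OF \<open>i \<in> Tset\<close>]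
    by (auto simp: enc_def intro!: restrict_ext)
  then have "restrict (\<lambda>(j, i). enc T U d W z' n' j i) ({0..<N} \<times> Tset) =
      restrict (\<lambda>(j, i). enc T U d W z n j i) ({0..<N} \<times> Tset)"
    by (intro restrict_ext) auto
  ultimately show ?thesis
    unfolding colluders_view_def w w' by simp
qed

theorem lemma1:
  fixes N T U d :: nat and W :: "'a::{finite,field} mat"
    and Tset U1 :: "nat set"
  assumes "T < U" and "U \<le> N"
    and "(U - T) dvd d"
    and "dim_row W = U" and "dim_col W = N"
    and "private_MDS T W"
    and "Tset \<subseteq> {0..<N}" and "card Tset = T"
    and "U1 \<subseteq> {0..<N}" and "card U1 \<ge> U"
  shows "prob_space.mutual_information
           (measure_pmf (pmf_of_set (sample_space N T U d :: ((nat \<Rightarrow> nat \<Rightarrow> 'a) \<times> _) set)))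
           2 (count_space UNIV) (count_space UNIV)
           (\<lambda>(z, n). restrict z ({0..<N} - Tset))
           (\<lambda>(z, n). (restrict z Tset,
                       restrict (\<lambda>(j, i). enc T U d W z n j i) ({0..<N} \<times> Tset)))
         = 0"
proof (fold secrets_outside_def colluders_view_def,
    rule mutual_information_pmf_of_set_eq_0_if_fibres_movable[OF finite_sample_space sample_space_not_empty])
  let ?\<Omega> = "sample_space N T U d :: ((nat \<Rightarrow> nat \<Rightarrow> 'a) \<times> _) set"
  fix w0 w1 assume "w0 \<in> ?\<Omega>" and w1: "w1 \<in> ?\<Omega>"
  define a where "a = (\<lambda>i c. if i \<in> Tset then 0 else fst w1 i c - fst w0 i c)"
  obtain b where b: "\<And>j i c. i \<in> Tset \<Longrightarrow> (\<Sum>k<U. W $$ (k, i) * block T U d a b j k c) = 0"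
    using exists_compensating_masks[OF assms(6,4) less_imp_le[OF assms(1)] _ assms(8)] assms(5,7)
    by fastforce
  show "\<exists>f. inj_on f ?\<Omega> \<and> f ` ?\<Omega> \<subseteq> ?\<Omega> \<and>
      (\<forall>w\<in>?\<Omega>. secrets_outside N Tset w = secrets_outside N Tset w0 \<longrightarrow>
         secrets_outside N Tset (f w) = secrets_outside N Tset w1) \<and>
      (\<forall>w\<in>?\<Omega>. colluders_view N T U d W Tset (f w) = colluders_view N T U d W Tset w)"
  proof (intro exI[of _ "translate N T U d a b"] conjI ballI impI)
    show "inj_on (translate N T U d a b) ?\<Omega>" by (rule inj_on_translate)
    show "translate N T U d a b ` ?\<Omega> \<subseteq> ?\<Omega>" using translate_in_sample_space by blast
  next
    fix w assume "w \<in> ?\<Omega>" "secrets_outside N Tset w = secrets_outside N Tset w0"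
    then show "secrets_outside N Tset (translate N T U d a b w) = secrets_outside N Tset w1"
      unfolding a_def by (rule secrets_outside_translate[OF _ w1])
  next
    fix w assume "w \<in> ?\<Omega>"
    then show "colluders_view N T U d W Tset (translate N T U d a b w) = colluders_view N T U d W Tset w"
      by (rule colluders_view_translate) (use assms(3,7) b in \<open>auto simp: a_def\<close>)
  qed
qed

end
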